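(* If a linear operator $T$ is compact on $L^2(\mathbb{R}^{n_1}\times\mathbb{R}^{n_2})$, then it satisfies the product weak compactness property: for every $R>0$, $$\lim_{z\to\infty}\sup_{w\in D(z_1,R)\times D(z_2,R)}|\langle T\psi_z,\psi_w\rangle|=0.$$
   Context: $\mathbb{R}^{n+1}_+=\mathbb{R}^n\times(0,\infty)$ is the $ax+b$ group with $(x,t)*(y,s)=(ty+x,ts)$ and hyperbolic (left-invariant Riemannian) metric $d$ given by $ds^2=(dx^2+dt^2)/t^2$; $D(z,R)$ is the $d$-ball of radius $R$ about $z$. For $z=(x,t)$ and $f$ on $\mathbb{R}^n$, $f_z=t^{-n/2}f((\cdot-x)/t)$. A real-valued $\psi\in\mathcal{D}(\mathbb{R}^n)$ (for $n=n_1,n_2$) is fixed with $\mathrm{supp}\,\psi\subseteq B(0,1)$, $\int\psi=0$, and $\int_0^\infty|\widehat\psi(t\xi)|^2\,dt/t=1$ for $\xi\neq0$. For $z=(z_1,z_2)\in\mathbb{R}^{n_1+1}_+\times\mathbb{R}^{n_2+1}_+$, $\psi_z=\psi_{z_1}\otimes\psi_{z_2}$, $(f_1\otimes f_2)(x_1,x_2)=f_1(x_1)f_2(x_2)$. "$z\to\infty$" means $z$ leaves $D((0,1),R')\times D((0,1),R')$ for every $R'>0$, i.e. $\lim_{R'\to\infty}\sup$ over $z$ outside that set. *)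

theory Defs
  imports "HOL-Analysis.Analysis"
begin

definition upper_half :: "('a::euclidean_space \<times> real) set" where
  "upper_half = {z. snd z > 0}"

text \<open>Hyperbolic distance of the metric (dx^2+dt^2)/t^2 (closed form).\<close>
definition hdist :: "('a::euclidean_space \<times> real) \<Rightarrow> ('a \<times> real) \<Rightarrow> real" where
  "hdist z w = arcosh (1 + ((norm (fst z - fst w))\<^sup>2 + (snd z - snd w)\<^sup>2)
                            / (2 * snd z * snd w))"

definition hball :: "('a::euclidean_space \<times> real) \<Rightarrow> real \<Rightarrow> ('a \<times> real) set" where
  "hball z R = {w \<in> upper_half. hdist z w < R}"

definition dil :: "('a::euclidean_space \<times> real) \<Rightarrow> ('a \<Rightarrow> real) \<Rightarrow> 'a \<Rightarrow> real" where
  "dil z f y = snd z powr (- real DIM('a) / 2) * f ((1 / snd z) *\<^sub>R (y - fst z))"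

definition tensor :: "('a \<Rightarrow> real) \<Rightarrow> ('b \<Rightarrow> real) \<Rightarrow> ('a \<times> 'b) \<Rightarrow> complex" where
  "tensor f g y = complex_of_real (f (fst y) * g (snd y))"

text \<open>C-infinity: all partial derivatives of all orders exist and are continuous.\<close>
coinductive smooth_real :: "('a::euclidean_space \<Rightarrow> real) \<Rightarrow> bool" where
  "continuous_on UNIV f \<Longrightarrow>
   (\<forall>i\<in>Basis. \<exists>g. smooth_real g \<and>
       (\<forall>x. ((\<lambda>s. f (x + s *\<^sub>R i)) has_real_derivative g x) (at 0)))
   \<Longrightarrow> smooth_real f"

definition fourier :: "('a::euclidean_space \<Rightarrow> real) \<Rightarrow> 'a \<Rightarrow> complex" where
  "fourier f \<xi> = (\<integral>x. complex_of_real (f x) * exp (- (2 * pi * \<i>) * complex_of_real (x \<bullet> \<xi>)) \<partial>lborel)"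

definition admissible_wavelet :: "('a::euclidean_space \<Rightarrow> real) \<Rightarrow> bool" where
  "admissible_wavelet \<psi> \<longleftrightarrow>
     smooth_real \<psi> \<and> closure {x. \<psi> x \<noteq> 0} \<subseteq> ball 0 1 \<and>
     integrable lborel \<psi> \<and> (\<integral>x. \<psi> x \<partial>lborel) = 0 \<and>
     (\<forall>\<xi>. \<xi> \<noteq> 0 \<longrightarrow>
        (\<integral>\<^sup>+ t\<in>{0<..}. ennreal ((cmod (fourier \<psi> (t *\<^sub>R \<xi>)))\<^sup>2 / t) \<partial>lborel) = 1)"

text \<open>L^2(R^{n1} x R^{n2}) (complex valued), represented by functions.\<close>
definition L2 :: "('c::euclidean_space \<Rightarrow> complex) set" where
  "L2 = {f. f \<in> borel_measurable lborel \<and> integrable lborel (\<lambda>y. (cmod (f y))\<^sup>2)}"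

definition L2_norm :: "('c::euclidean_space \<Rightarrow> complex) \<Rightarrow> real" where
  "L2_norm f = sqrt (\<integral>y. (cmod (f y))\<^sup>2 \<partial>lborel)"

definition L2_inner :: "('c::euclidean_space \<Rightarrow> complex) \<Rightarrow> ('c \<Rightarrow> complex) \<Rightarrow> complex" where
  "L2_inner f g = (\<integral>y. f y * cnj (g y) \<partial>lborel)"

definition linear_L2 :: "(('c::euclidean_space \<Rightarrow> complex) \<Rightarrow> ('c \<Rightarrow> complex)) \<Rightarrow> bool" where
  "linear_L2 T \<longleftrightarrow> (\<forall>f\<in>L2. T f \<in> L2) \<and>
     (\<forall>f\<in>L2. \<forall>g\<in>L2. T (\<lambda>y. f y + g y) = (\<lambda>y. T f y + T g y)) \<and>
     (\<forall>f\<in>L2. \<forall>c. T (\<lambda>y. c * f y) = (\<lambda>y. c * T f y))"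

definition compact_L2 :: "(('c::euclidean_space \<Rightarrow> complex) \<Rightarrow> ('c \<Rightarrow> complex)) \<Rightarrow> bool" where
  "compact_L2 T \<longleftrightarrow>
     (\<forall>f :: nat \<Rightarrow> 'c \<Rightarrow> complex. (\<forall>k. f k \<in> L2) \<and> (\<exists>B. \<forall>k. L2_norm (f k) \<le> B) \<longrightarrow>
        (\<exists>g\<in>L2. \<exists>r. strict_mono r \<and> (\<lambda>k. L2_norm (\<lambda>y. T (f (r k)) y - g y)) \<longlonglongrightarrow> 0))"

end

(*
  The wave packets psi_z = psi_{z1} (x) psi_{z2} form a bounded family in L2 that becomes
  asymptotically orthogonal at infinity: the integral of |psi_w| |psi_z| is at most (B1 B2)^2
  times the normalised overlaps of the supporting balls, and for fixed w these overlaps tend to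
  zero as z leaves every hyperbolic ball, because either the scales separate or, at comparable
  scales, the centres drift apart and the balls become disjoint.

  A compact operator maps such a family to one tending to zero in norm: if T psi_{z_k} -> g along
  a subsequence, the sum h of N almost orthogonal packets with T psi_{z_k} close to g has
  ||h|| = O(sqrt N) while ||T h|| >= N ||g|| / 2, which forces g = 0.
*)
theory Submission
  imports Defs
begin

section \<open>The space L2\<close>

lemma L2_measurable: "f \<in> L2 \<Longrightarrow> f \<in> borel_measurable lborel"
  by (simp add: L2_def)

lemma L2_integrable_norm_sq: "f \<in> L2 \<Longrightarrow> integrable lborel (\<lambda>y. (cmod (f y))\<^sup>2)"
  by (simp add: L2_def)

lemma L2_norm_nonneg: "L2_norm f \<ge> 0"
  by (simp add: L2_norm_def)

lemma L2_norm_sq: "(L2_norm f)\<^sup>2 = (\<integral>y. (cmod (f y))\<^sup>2 \<partial>lborel)"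
  unfolding L2_norm_def by (simp add: integral_nonneg_AE)

lemma L2_norm_minus_commute: "L2_norm (\<lambda>y. f y - g y) = L2_norm (\<lambda>y. g y - f y)"
  unfolding L2_norm_def by (simp add: norm_minus_commute)

lemma L2_integrable_norm_mult:
  assumes "f \<in> L2" "g \<in> L2"
  shows "integrable lborel (\<lambda>y. cmod (f y) * cmod (g y))"
proof (rule Bochner_Integration.integrable_bound)
  show "integrable lborel (\<lambda>y. (cmod (f y))\<^sup>2 + (cmod (g y))\<^sup>2)"
    using assms by (auto intro: L2_integrable_norm_sq)
  show "(\<lambda>y. cmod (f y) * cmod (g y)) \<in> borel_measurable lborel"
    using assms[THEN L2_measurable] by measurable
  show "AE y in lborel. norm (cmod (f y) * cmod (g y)) \<le> norm ((cmod (f y))\<^sup>2 + (cmod (g y))\<^sup>2)"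
  proof (rule AE_I2)
    fix y
    have "cmod (f y) * cmod (g y) \<le> (cmod (f y))\<^sup>2 + (cmod (g y))\<^sup>2"
      using sum_squares_bound[of "cmod (f y)" "cmod (g y)"]
        mult_nonneg_nonneg[OF norm_ge_zero norm_ge_zero, of "f y" "g y"] by linarith
    then show "norm (cmod (f y) * cmod (g y)) \<le> norm ((cmod (f y))\<^sup>2 + (cmod (g y))\<^sup>2)"
      by (simp add: abs_mult)
  qed
qed

lemma L2_integral_norm_mult_le:
  assumes "f \<in> L2" "g \<in> L2"
  shows "(\<integral>y. cmod (f y) * cmod (g y) \<partial>lborel) \<le> L2_norm f * L2_norm g"
proof -
  have [measurable]: "f \<in> borel_measurable borel" "g \<in> borel_measurable borel"
    using assms[THEN L2_measurable] by auto
  have nn: "(\<integral>\<^sup>+y. ennreal (h y) \<partial>lborel) = ennreal (\<integral>y. h y \<partial>lborel)"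
    if "integrable lborel h" "\<And>y. h y \<ge> 0" for h :: "_ \<Rightarrow> real"
    using that by (intro nn_integral_eq_integral) auto
  have sq: "(\<integral>\<^sup>+y. ennreal (cmod (h y)) ^ 2 \<partial>lborel) = ennreal (\<integral>y. (cmod (h y))\<^sup>2 \<partial>lborel)"
    if "h \<in> L2" for h
    using L2_integrable_norm_sq[OF that] by (simp add: ennreal_power nn)
  have "ennreal ((\<integral>y. cmod (f y) * cmod (g y) \<partial>lborel)\<^sup>2)
      = (\<integral>\<^sup>+y. ennreal (cmod (f y)) * ennreal (cmod (g y)) \<partial>lborel)\<^sup>2"
    using L2_integrable_norm_mult[OF assms]
    by (simp add: nn ennreal_power integral_nonneg_AE flip: ennreal_mult)
  also have "\<dots> \<le> (\<integral>\<^sup>+y. ennreal (cmod (f y)) ^ 2 \<partial>lborel) * (\<integral>\<^sup>+y. ennreal (cmod (g y)) ^ 2 \<partial>lborel)"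
    by (rule Cauchy_Schwarz_nn_integral) auto
  also have "\<dots> = ennreal ((\<integral>y. (cmod (f y))\<^sup>2 \<partial>lborel) * (\<integral>y. (cmod (g y))\<^sup>2 \<partial>lborel))"
    using assms by (simp add: sq ennreal_mult integral_nonneg_AE)
  finally have "(\<integral>y. cmod (f y) * cmod (g y) \<partial>lborel)\<^sup>2
      \<le> (\<integral>y. (cmod (f y))\<^sup>2 \<partial>lborel) * (\<integral>y. (cmod (g y))\<^sup>2 \<partial>lborel)"
    by (simp add: ennreal_le_iff integral_nonneg_AE)
  then show ?thesis
    unfolding L2_norm_def real_sqrt_mult[symmetric] by (rule real_le_rsqrt)
qed

lemma L2_add:
  assumes "f \<in> L2" "g \<in> L2"
  shows "(\<lambda>y. f y + g y) \<in> L2"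
proof -
  have "integrable lborel (\<lambda>y. (cmod (f y + g y))\<^sup>2)"
  proof (rule Bochner_Integration.integrable_bound)
    show "integrable lborel (\<lambda>y. 2 * (cmod (f y))\<^sup>2 + 2 * (cmod (g y))\<^sup>2)"
      using assms[THEN L2_integrable_norm_sq] by auto
    show "(\<lambda>y. (cmod (f y + g y))\<^sup>2) \<in> borel_measurable lborel"
      using assms[THEN L2_measurable] by measurable
    show "AE y in lborel. norm ((cmod (f y + g y))\<^sup>2) \<le> norm (2 * (cmod (f y))\<^sup>2 + 2 * (cmod (g y))\<^sup>2)"
    proof (rule AE_I2)
      fix y
      have "(cmod (f y + g y))\<^sup>2 \<le> (cmod (f y) + cmod (g y))\<^sup>2"
        by (intro power_mono norm_triangle_ineq) auto
      also have "\<dots> \<le> 2 * (cmod (f y))\<^sup>2 + 2 * (cmod (g y))\<^sup>2"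
        using sum_squares_bound[of "cmod (f y)" "cmod (g y)"] by (simp add: power2_sum)
      finally show "norm ((cmod (f y + g y))\<^sup>2) \<le> norm (2 * (cmod (f y))\<^sup>2 + 2 * (cmod (g y))\<^sup>2)"
        by simp
    qed
  qed
  moreover have "(\<lambda>y. f y + g y) \<in> borel_measurable lborel"
    using assms[THEN L2_measurable] by measurable
  ultimately show ?thesis by (simp add: L2_def)
qed

lemma L2_cmult: "f \<in> L2 \<Longrightarrow> (\<lambda>y. c * f y) \<in> L2"
  by (auto simp: L2_def norm_mult power_mult_distrib)

lemma L2_zero: "(\<lambda>y. 0) \<in> L2"
  by (simp add: L2_def)

lemma L2_diff: "f \<in> L2 \<Longrightarrow> g \<in> L2 \<Longrightarrow> (\<lambda>y. f y - g y) \<in> L2"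
  using L2_add[OF _ L2_cmult, of f g "-1"] by simp

lemma L2_sum: "finite S \<Longrightarrow> (\<And>i. i \<in> S \<Longrightarrow> f i \<in> L2) \<Longrightarrow> (\<lambda>y. \<Sum>i\<in>S. f i y) \<in> L2"
  by (induction S rule: finite_induct) (auto simp: L2_zero intro!: L2_add)

lemma L2_norm_cmult: "L2_norm (\<lambda>y. c * f y) = cmod c * L2_norm f"
  by (simp add: L2_norm_def norm_mult power_mult_distrib real_sqrt_mult)

lemma L2_norm_triangle:
  assumes "f \<in> L2" "g \<in> L2"
  shows "L2_norm (\<lambda>y. f y + g y) \<le> L2_norm f + L2_norm g"
proof -
  have "(L2_norm (\<lambda>y. f y + g y))\<^sup>2
      \<le> (\<integral>y. (cmod (f y))\<^sup>2 + 2 * (cmod (f y) * cmod (g y)) + (cmod (g y))\<^sup>2 \<partial>lborel)"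
    unfolding L2_norm_sq
  proof (rule integral_mono)
    show "integrable lborel (\<lambda>y. (cmod (f y + g y))\<^sup>2)"
      using L2_add[OF assms] by (rule L2_integrable_norm_sq)
    show "integrable lborel (\<lambda>y. (cmod (f y))\<^sup>2 + 2 * (cmod (f y) * cmod (g y)) + (cmod (g y))\<^sup>2)"
      using assms[THEN L2_integrable_norm_sq] L2_integrable_norm_mult[OF assms] by auto
    fix y
    have "(cmod (f y + g y))\<^sup>2 \<le> (cmod (f y) + cmod (g y))\<^sup>2"
      by (intro power_mono norm_triangle_ineq) auto
    then show "(cmod (f y + g y))\<^sup>2 \<le> (cmod (f y))\<^sup>2 + 2 * (cmod (f y) * cmod (g y)) + (cmod (g y))\<^sup>2"
      by (simp add: power2_sum)
  qed
  also have "\<dots> = (L2_norm f)\<^sup>2 + 2 * (\<integral>y. cmod (f y) * cmod (g y) \<partial>lborel) + (L2_norm g)\<^sup>2"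
    unfolding L2_norm_sq
    using assms[THEN L2_integrable_norm_sq] L2_integrable_norm_mult[OF assms] by simp
  also have "\<dots> \<le> (L2_norm f + L2_norm g)\<^sup>2"
    using L2_integral_norm_mult_le[OF assms] by (simp add: power2_sum)
  finally show ?thesis
    by (rule power2_le_imp_le) (simp add: L2_norm_nonneg)
qed

lemma L2_norm_sum:
  "finite S \<Longrightarrow> (\<And>i. i \<in> S \<Longrightarrow> f i \<in> L2) \<Longrightarrow>
    L2_norm (\<lambda>y. \<Sum>i\<in>S. f i y) \<le> (\<Sum>i\<in>S. L2_norm (f i))"
proof (induction S rule: finite_induct)
  case empty
  then show ?case by (simp add: L2_norm_def)
next
  case (insert x F)
  then have "L2_norm (\<lambda>y. f x y + (\<Sum>i\<in>F. f i y)) \<le> L2_norm (f x) + L2_norm (\<lambda>y. \<Sum>i\<in>F. f i y)"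
    by (intro L2_norm_triangle L2_sum) auto
  with insert show ?case by simp
qed

lemma norm_L2_inner_le:
  assumes "f \<in> L2" "g \<in> L2"
  shows "cmod (L2_inner f g) \<le> L2_norm f * L2_norm g"
proof -
  have "cmod (L2_inner f g) \<le> (\<integral>y. cmod (f y * cnj (g y)) \<partial>lborel)"
    unfolding L2_inner_def by (rule integral_norm_bound)
  also have "\<dots> \<le> L2_norm f * L2_norm g"
    using L2_integral_norm_mult_le[OF assms] by (simp add: norm_mult)
  finally show ?thesis .
qed

lemma L2_norm_sum_sq_le:
  assumes "finite S" "\<And>i. i \<in> S \<Longrightarrow> f i \<in> L2"
  shows "(L2_norm (\<lambda>y. \<Sum>i\<in>S. f i y))\<^sup>2 \<le> (\<Sum>i\<in>S. \<Sum>j\<in>S. \<integral>y. cmod (f i y) * cmod (f j y) \<partial>lborel)"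
proof -
  have int: "integrable lborel (\<lambda>y. cmod (f i y) * cmod (f j y))" if "i \<in> S" "j \<in> S" for i j
    using that assms(2) by (intro L2_integrable_norm_mult)
  have "(L2_norm (\<lambda>y. \<Sum>i\<in>S. f i y))\<^sup>2
      \<le> (\<integral>y. (\<Sum>i\<in>S. \<Sum>j\<in>S. cmod (f i y) * cmod (f j y)) \<partial>lborel)"
    unfolding L2_norm_sq
  proof (rule integral_mono)
    show "integrable lborel (\<lambda>y. (cmod (\<Sum>i\<in>S. f i y))\<^sup>2)"
      using L2_sum[OF assms] by (rule L2_integrable_norm_sq)
    show "integrable lborel (\<lambda>y. \<Sum>i\<in>S. \<Sum>j\<in>S. cmod (f i y) * cmod (f j y))"
      using int by (intro Bochner_Integration.integrable_sum) auto
    fix y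
    have "(cmod (\<Sum>i\<in>S. f i y))\<^sup>2 \<le> (\<Sum>i\<in>S. cmod (f i y))\<^sup>2"
      by (intro power_mono norm_sum) auto
    then show "(cmod (\<Sum>i\<in>S. f i y))\<^sup>2 \<le> (\<Sum>i\<in>S. \<Sum>j\<in>S. cmod (f i y) * cmod (f j y))"
      by (simp add: power2_eq_square sum_product)
  qed
  also have "\<dots> = (\<Sum>i\<in>S. \<Sum>j\<in>S. \<integral>y. cmod (f i y) * cmod (f j y) \<partial>lborel)"
    using int by (simp add: Bochner_Integration.integrable_sum)
  finally show ?thesis .
qed

lemma L2_norm_sum_sq_almost_orthogonal:
  fixes M \<delta> :: real
  assumes "finite S" "\<And>i. i \<in> S \<Longrightarrow> f i \<in> L2" "\<And>i. i \<in> S \<Longrightarrow> L2_norm (f i) \<le> M"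
    and "\<And>i j. i \<in> S \<Longrightarrow> j \<in> S \<Longrightarrow> i \<noteq> j \<Longrightarrow> (\<integral>y. cmod (f i y) * cmod (f j y) \<partial>lborel) \<le> \<delta>"
    and "\<delta> \<ge> 0"
  shows "(L2_norm (\<lambda>y. \<Sum>i\<in>S. f i y))\<^sup>2 \<le> card S * (M\<^sup>2 + card S * \<delta>)"
proof -
  have "(\<integral>y. cmod (f i y) * cmod (f j y) \<partial>lborel) \<le> (if i = j then M\<^sup>2 else 0) + \<delta>"
    if "i \<in> S" "j \<in> S" for i j
  proof (cases "i = j")
    case True
    have "(\<integral>y. cmod (f i y) * cmod (f i y) \<partial>lborel) = (L2_norm (f i))\<^sup>2"
      using L2_norm_sq[of "f i"] by (simp add: power2_eq_square)
    also have "\<dots> \<le> M\<^sup>2"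
      using assms(3)[OF that(1)] L2_norm_nonneg by (rule power_mono)
    finally show ?thesis using True assms(5) by simp
  qed (use assms(4) that in simp)
  then have "(\<Sum>i\<in>S. \<Sum>j\<in>S. \<integral>y. cmod (f i y) * cmod (f j y) \<partial>lborel)
      \<le> (\<Sum>i\<in>S. \<Sum>j\<in>S. (if i = j then M\<^sup>2 else 0) + \<delta>)"
    by (intro sum_mono) auto
  also have "\<dots> = (\<Sum>i\<in>S. M\<^sup>2 + card S * \<delta>)"
    using assms(1) by (simp add: sum.distrib)
  also have "\<dots> = card S * (M\<^sup>2 + card S * \<delta>)"
    by simp
  finally show ?thesis
    using L2_norm_sum_sq_le[OF assms(1,2)] by (rule order_trans[rotated])
qed

section \<open>Compact operators on almost orthogonal families\<close>

lemma linear_L2_mem_L2: "linear_L2 T \<Longrightarrow> f \<in> L2 \<Longrightarrow> T f \<in> L2"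
  by (simp add: linear_L2_def)

lemma linear_L2_cmult: "linear_L2 T \<Longrightarrow> f \<in> L2 \<Longrightarrow> T (\<lambda>y. c * f y) = (\<lambda>y. c * T f y)"
  by (simp add: linear_L2_def)

lemma linear_L2_sum:
  assumes "linear_L2 T" "finite S" "\<And>i. i \<in> S \<Longrightarrow> f i \<in> L2"
  shows "T (\<lambda>y. \<Sum>i\<in>S. f i y) = (\<lambda>y. \<Sum>i\<in>S. T (f i) y)"
  using assms(2,3)
proof (induction S rule: finite_induct)
  case empty
  then show ?case using linear_L2_cmult[OF assms(1) L2_zero, of 0] by simp
next
  case (insert x F)
  then have "T (\<lambda>y. f x y + (\<Sum>i\<in>F. f i y)) = (\<lambda>y. T (f x) y + T (\<lambda>y. \<Sum>i\<in>F. f i y) y)"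
    using assms(1) L2_sum[of F f] unfolding linear_L2_def by auto
  with insert show ?case by simp
qed

lemma linear_L2_large_on_unit_ball:
  assumes "linear_L2 T" "f \<in> L2" "L2_norm (T f) > c * L2_norm f" "c \<ge> 0"
  obtains h where "h \<in> L2" "L2_norm h \<le> 1" "L2_norm (T h) \<ge> c"
proof -
  have scaled: "(\<lambda>y. complex_of_real a * f y) \<in> L2"
    "L2_norm (\<lambda>y. complex_of_real a * f y) = \<bar>a\<bar> * L2_norm f"
    "L2_norm (T (\<lambda>y. complex_of_real a * f y)) = \<bar>a\<bar> * L2_norm (T f)" for a
    using assms(1,2) by (simp_all add: L2_cmult L2_norm_cmult linear_L2_cmult)
  show ?thesis
  proof (cases "L2_norm f = 0")
    case True
    then have "L2_norm (T f) > 0"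
      using assms(3) by simp
    then show ?thesis
      using assms(4) True scaled[of "c / L2_norm (T f)"] by (intro that) auto
  next
    case False
    then have pos: "L2_norm f > 0"
      using L2_norm_nonneg[of f] by simp
    then have "c \<le> L2_norm (T f) / L2_norm f"
      using assms(3) by (simp add: field_simps)
    with pos show ?thesis
      using scaled[of "1 / L2_norm f"] by (intro that) auto
  qed
qed

lemma compact_L2_bounded:
  assumes "linear_L2 T" "compact_L2 T"
  obtains C where "C \<ge> 0" "\<And>f. f \<in> L2 \<Longrightarrow> L2_norm (T f) \<le> C * L2_norm f"
proof (rule ccontr)
  assume "\<not> thesis"
  with that have "\<exists>f\<in>L2. L2_norm (T f) > real k * L2_norm f" for k :: nat
    by (meson not_le of_nat_0_le_iff)
  then have "\<exists>h. h \<in> L2 \<and> L2_norm h \<le> 1 \<and> L2_norm (T h) \<ge> real k" for k :: nat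
    by (metis linear_L2_large_on_unit_ball[OF assms(1)] of_nat_0_le_iff)
  then obtain h where h: "\<And>k. h k \<in> L2" "\<And>k. L2_norm (h k) \<le> 1" "\<And>k. L2_norm (T (h k)) \<ge> real k"
    by metis
  then obtain g r where g: "g \<in> L2" "strict_mono r"
      and lim: "(\<lambda>k. L2_norm (\<lambda>y. T (h (r k)) y - g y)) \<longlonglongrightarrow> 0"
    using assms(2) unfolding compact_L2_def by blast
  obtain k where k: "L2_norm (\<lambda>y. T (h (r k)) y - g y) < 1" "nat \<lceil>1 + L2_norm g\<rceil> < k"
    using eventually_conj[OF order_tendstoD(2)[OF lim zero_less_one]
        eventually_gt_at_top[of "nat \<lceil>1 + L2_norm g\<rceil>"]]
    by (auto simp: eventually_sequentially)
  have "real k \<le> L2_norm (T (h (r k)))"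
    using seq_suble[OF g(2), of k] h(3)[of "r k"] by linarith
  also have "\<dots> \<le> L2_norm (\<lambda>y. T (h (r k)) y - g y) + L2_norm g"
    using L2_norm_triangle[OF L2_diff[OF linear_L2_mem_L2[OF assms(1) h(1)] g(1)] g(1)] by simp
  finally show False
    using k by linarith
qed

lemma finite_subset_eventually_pairwise:
  assumes "\<And>i. eventually (Q i) sequentially" "eventually P sequentially"
  shows "\<exists>S. finite S \<and> card S = N \<and> (\<forall>i\<in>S. P i) \<and> (\<forall>i\<in>S. \<forall>j\<in>S. i < j \<longrightarrow> Q i j)"
proof (induction N)
  case 0
  show ?case by (intro exI[of _ "{}"]) simp
next
  case (Suc N)
  then obtain S where S: "finite S" "card S = N" "\<forall>i\<in>S. P i" "\<forall>i\<in>S. \<forall>j\<in>S. i < j \<longrightarrow> Q i j"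
    by blast
  have "eventually (\<lambda>k. P k \<and> (\<forall>i\<in>S. Q i k \<and> i < k)) sequentially"
    using assms S(1) by (intro eventually_conj eventually_ball_finite ballI eventually_gt_at_top) auto
  then obtain k where k: "P k" "\<forall>i\<in>S. Q i k \<and> i < k"
    using eventually_happens' sequentially_bot by blast
  then have "k \<notin> S"
    by blast
  with S k show ?case
    by (intro exI[of _ "insert k S"]) (auto simp: not_less_iff_gr_or_eq)
qed

lemma almost_orthogonal_sum_bound:
  fixes f :: "'i \<Rightarrow> 'c::euclidean_space \<Rightarrow> complex"
  assumes T: "linear_L2 T" "\<And>h. h \<in> L2 \<Longrightarrow> L2_norm (T h) \<le> C * L2_norm h"
    and S: "finite S" "S \<noteq> {}"
    and f: "\<And>i. i \<in> S \<Longrightarrow> f i \<in> L2" "\<And>i. i \<in> S \<Longrightarrow> L2_norm (f i) \<le> M"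
    and small: "\<And>i j. i \<in> S \<Longrightarrow> j \<in> S \<Longrightarrow> i \<noteq> j \<Longrightarrow>
      (\<integral>y. cmod (f i y) * cmod (f j y) \<partial>lborel) \<le> 1 / card S"
    and g: "g \<in> L2" "\<And>i. i \<in> S \<Longrightarrow> L2_norm (\<lambda>y. T (f i) y - g y) \<le> L2_norm g / 2"
  shows "card S * (L2_norm g)\<^sup>2 \<le> 4 * C\<^sup>2 * (M\<^sup>2 + 1)"
proof -
  define N where "N = card S"
  have "N > 0"
    using S by (simp add: N_def card_gt_0_iff)
  define h where "h = (\<lambda>y. \<Sum>i\<in>S. f i y)"
  have "h \<in> L2"
    unfolding h_def using S(1) f(1) by (rule L2_sum)
  have h_sq: "(L2_norm h)\<^sup>2 \<le> N * (M\<^sup>2 + 1)"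
    using L2_norm_sum_sq_almost_orthogonal[OF S(1) f small] \<open>N > 0\<close> by (simp add: h_def N_def)
  have "(\<lambda>y. of_nat N * g y - T h y) = (\<lambda>y. \<Sum>i\<in>S. g y - T (f i) y)"
    using linear_L2_sum[OF T(1) S(1) f(1)] by (simp add: h_def N_def sum_subtractf)
  then have "L2_norm (\<lambda>y. of_nat N * g y - T h y) \<le> (\<Sum>i\<in>S. L2_norm (\<lambda>y. T (f i) y - g y))"
    using L2_norm_sum[OF S(1), of "\<lambda>i y. g y - T (f i) y"] g(1) f(1) linear_L2_mem_L2[OF T(1)]
    by (simp add: L2_diff L2_norm_minus_commute)
  also have "\<dots> \<le> N * (L2_norm g / 2)"
    using sum_mono[of S _ "\<lambda>_. L2_norm g / 2", OF g(2)] by (simp add: N_def)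
  finally have "N * L2_norm g \<le> N * (L2_norm g / 2) + C * L2_norm h"
    using L2_norm_triangle[OF L2_diff[OF L2_cmult[OF g(1)] linear_L2_mem_L2[OF T(1) \<open>h \<in> L2\<close>]]
        linear_L2_mem_L2[OF T(1) \<open>h \<in> L2\<close>], of "of_nat N"]
      T(2)[OF \<open>h \<in> L2\<close>] by (simp add: L2_norm_cmult)
  then have "(N * L2_norm g / 2)\<^sup>2 \<le> (C * L2_norm h)\<^sup>2"
    by (intro power_mono) (auto simp: L2_norm_nonneg)
  also have "\<dots> \<le> C\<^sup>2 * (N * (M\<^sup>2 + 1))"
    using h_sq by (simp add: power_mult_distrib mult_left_mono)
  finally have "N * (N * (L2_norm g)\<^sup>2) \<le> N * (4 * C\<^sup>2 * (M\<^sup>2 + 1))"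
    by (simp add: power2_eq_square field_simps)
  then show ?thesis
    using \<open>N > 0\<close> by (simp add: N_def)
qed

lemma almost_orthogonal_limit_eq_0:
  fixes f :: "nat \<Rightarrow> 'c::euclidean_space \<Rightarrow> complex"
  assumes T: "linear_L2 T" "\<And>h. h \<in> L2 \<Longrightarrow> L2_norm (T h) \<le> C * L2_norm h"
    and f: "\<And>k. f k \<in> L2" "\<And>k. L2_norm (f k) \<le> M"
    and orth: "\<And>j. (\<lambda>k. \<integral>y. cmod (f j y) * cmod (f k y) \<partial>lborel) \<longlonglongrightarrow> 0"
    and g: "g \<in> L2" "(\<lambda>k. L2_norm (\<lambda>y. T (f k) y - g y)) \<longlonglongrightarrow> 0"
  shows "L2_norm g = 0"
proof (rule ccontr)
  assume "L2_norm g \<noteq> 0"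
  then have g_pos: "L2_norm g > 0"
    using L2_norm_nonneg[of g] by simp
  obtain N :: nat where N: "real N > 4 * C\<^sup>2 * (M\<^sup>2 + 1) / (L2_norm g)\<^sup>2"
    using reals_Archimedean2 by blast
  moreover have "4 * C\<^sup>2 * (M\<^sup>2 + 1) / (L2_norm g)\<^sup>2 \<ge> 0"
    by simp
  ultimately have "N > 0"
    by (metis of_nat_0_less_iff le_less_trans)
  have "\<exists>S. finite S \<and> card S = N \<and> (\<forall>i\<in>S. L2_norm (\<lambda>y. T (f i) y - g y) \<le> L2_norm g / 2) \<and>
      (\<forall>i\<in>S. \<forall>j\<in>S. i < j \<longrightarrow> (\<integral>y. cmod (f i y) * cmod (f j y) \<partial>lborel) \<le> 1 / N)"
  proof (rule finite_subset_eventually_pairwise)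
    show "eventually (\<lambda>j. (\<integral>y. cmod (f i y) * cmod (f j y) \<partial>lborel) \<le> 1 / N) sequentially" for i
      using order_tendstoD(2)[OF orth[of i], of "1 / N"] \<open>N > 0\<close> by (auto elim: eventually_mono)
    show "eventually (\<lambda>i. L2_norm (\<lambda>y. T (f i) y - g y) \<le> L2_norm g / 2) sequentially"
      using order_tendstoD(2)[OF g(2), of "L2_norm g / 2"] g_pos by (auto elim: eventually_mono)
  qed
  then obtain S where S: "finite S" "card S = N"
      and close: "\<And>i. i \<in> S \<Longrightarrow> L2_norm (\<lambda>y. T (f i) y - g y) \<le> L2_norm g / 2"
      and small: "\<And>i j. i \<in> S \<Longrightarrow> j \<in> S \<Longrightarrow> i < j \<Longrightarrow> (\<integral>y. cmod (f i y) * cmod (f j y) \<partial>lborel) \<le> 1 / N"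
    by blast
  have "(\<integral>y. cmod (f i y) * cmod (f j y) \<partial>lborel) \<le> 1 / card S" if "i \<in> S" "j \<in> S" "i \<noteq> j" for i j
    using small[OF that(1,2)] small[OF that(2,1)] that(3) S(2)
    by (cases "i < j") (simp_all add: mult.commute)
  then have "real N * (L2_norm g)\<^sup>2 \<le> 4 * C\<^sup>2 * (M\<^sup>2 + 1)"
    using almost_orthogonal_sum_bound[OF T S(1), of f M g] f g(1) close S(2) \<open>N > 0\<close> by fastforce
  moreover from N have "real N * (L2_norm g)\<^sup>2 > 4 * C\<^sup>2 * (M\<^sup>2 + 1)"
    using g_pos by (simp add: field_simps)
  ultimately show False
    by linarith
qed

lemma compact_L2_almost_orthogonal_subseq:
  fixes f :: "nat \<Rightarrow> 'c::euclidean_space \<Rightarrow> complex"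
  assumes T: "linear_L2 T" "compact_L2 T"
    and f: "\<And>k. f k \<in> L2" "\<And>k. L2_norm (f k) \<le> M"
    and orth: "\<And>j. (\<lambda>k. \<integral>y. cmod (f j y) * cmod (f k y) \<partial>lborel) \<longlonglongrightarrow> 0"
  obtains r where "strict_mono r" "(\<lambda>k. L2_norm (T (f (r k)))) \<longlonglongrightarrow> 0"
proof -
  obtain C where C: "\<And>h. h \<in> L2 \<Longrightarrow> L2_norm (T h) \<le> C * L2_norm h"
    using compact_L2_bounded[OF T] by blast
  obtain g r where g: "g \<in> L2" "strict_mono r"
      and lim: "(\<lambda>k. L2_norm (\<lambda>y. T (f (r k)) y - g y)) \<longlonglongrightarrow> 0"
    using T(2) f unfolding compact_L2_def by blast
  have "(\<lambda>k. \<integral>y. cmod (f (r j) y) * cmod (f (r k) y) \<partial>lborel) \<longlonglongrightarrow> 0" for j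
    using LIMSEQ_subseq_LIMSEQ[OF orth[of "r j"] g(2)] by (simp add: o_def)
  then have "L2_norm g = 0"
    using f by (intro almost_orthogonal_limit_eq_0[OF T(1) C _ _ _ g(1) lim])
  then have "L2_norm (T (f (r k))) \<le> L2_norm (\<lambda>y. T (f (r k)) y - g y)" for k
    using L2_norm_triangle[OF L2_diff[OF linear_L2_mem_L2[OF T(1) f(1)] g(1)] g(1)] by simp
  then have "(\<lambda>k. L2_norm (T (f (r k)))) \<longlonglongrightarrow> 0"
    by (intro tendsto_sandwich[OF _ _ tendsto_const lim] always_eventually allI L2_norm_nonneg) auto
  with g(2) show thesis
    by (rule that)
qed

lemma compact_L2_vanishes_at_infinity:
  fixes \<Phi> :: "'i \<Rightarrow> 'c::euclidean_space \<Rightarrow> complex" and far :: "real \<Rightarrow> 'i \<Rightarrow> bool"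
  assumes T: "linear_L2 T" "compact_L2 T"
    and \<Phi>: "\<And>i. i \<in> I \<Longrightarrow> \<Phi> i \<in> L2" "\<And>i. i \<in> I \<Longrightarrow> L2_norm (\<Phi> i) \<le> M"
    and far_mono: "\<And>R R' i. far R' i \<Longrightarrow> R \<le> R' \<Longrightarrow> far R i"
    and decay: "\<And>j \<delta>. j \<in> I \<Longrightarrow> \<delta> > 0 \<Longrightarrow>
      \<exists>R. \<forall>i\<in>I. far R i \<longrightarrow> (\<integral>y. cmod (\<Phi> j y) * cmod (\<Phi> i y) \<partial>lborel) \<le> \<delta>"
    and "\<epsilon> > 0"
  shows "\<exists>R. \<forall>i\<in>I. far R i \<longrightarrow> L2_norm (T (\<Phi> i)) \<le> \<epsilon>"
proof (rule ccontr)
  assume "\<not> ?thesis"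
  then have "\<exists>i\<in>I. far (real k) i \<and> L2_norm (T (\<Phi> i)) > \<epsilon>" for k :: nat
    by (auto simp: not_le)
  then obtain x where x: "\<And>k. x k \<in> I" "\<And>k. far (real k) (x k)" "\<And>k. L2_norm (T (\<Phi> (x k))) > \<epsilon>"
    by metis
  have "(\<lambda>k. \<integral>y. cmod (\<Phi> (x j) y) * cmod (\<Phi> (x k) y) \<partial>lborel) \<longlonglongrightarrow> 0" for j
  proof (rule order_tendstoI)
    show "eventually (\<lambda>k. a < (\<integral>y. cmod (\<Phi> (x j) y) * cmod (\<Phi> (x k) y) \<partial>lborel)) sequentially"
      if "a < 0" for a
      by (intro always_eventually allI less_le_trans[OF that] integral_nonneg_AE) auto
    show "eventually (\<lambda>k. (\<integral>y. cmod (\<Phi> (x j) y) * cmod (\<Phi> (x k) y) \<partial>lborel) < a) sequentially"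
      if a: "0 < a" for a
    proof -
      obtain R where R: "\<forall>i\<in>I. far R i \<longrightarrow> (\<integral>y. cmod (\<Phi> (x j) y) * cmod (\<Phi> i y) \<partial>lborel) \<le> a / 2"
        using decay[OF x(1)[of j], of "a / 2"] a by auto
      have "eventually (\<lambda>k. R \<le> real k) sequentially"
        by (rule eventually_sequentiallyI[of "nat \<lceil>R\<rceil>"]) linarith
      then show ?thesis
        by (rule eventually_mono) (use R x far_mono a in fastforce)
    qed
  qed
  then obtain r where "(\<lambda>k. L2_norm (T (\<Phi> (x (r k))))) \<longlonglongrightarrow> 0"
    using compact_L2_almost_orthogonal_subseq[OF T, of "\<lambda>k. \<Phi> (x k)" M] \<Phi> x(1) by blast
  then obtain k where "L2_norm (T (\<Phi> (x (r k)))) < \<epsilon>"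
    using order_tendstoD(2)[OF _ \<open>\<epsilon> > 0\<close>] eventually_happens' sequentially_bot by blast
  with x(3)[of "r k"] show False
    by linarith
qed

section \<open>Dilated bumps and the overlap of their supports\<close>

definition unit_bump :: "real \<Rightarrow> ('a::euclidean_space \<Rightarrow> real) \<Rightarrow> bool" where
  "unit_bump B \<psi> \<longleftrightarrow> \<psi> \<in> borel_measurable borel \<and> (\<forall>y. \<bar>\<psi> y\<bar> \<le> B) \<and> (\<forall>y. \<psi> y \<noteq> 0 \<longrightarrow> norm y < 1)"

lemma unit_bump_nonneg: "unit_bump B \<psi> \<Longrightarrow> B \<ge> 0"
  unfolding unit_bump_def using abs_ge_zero order_trans by blast

lemma admissible_wavelet_unit_bump:
  assumes "admissible_wavelet \<psi>"
  obtains B where "unit_bump B \<psi>"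
proof -
  have "smooth_real \<psi>"
    using assms unfolding admissible_wavelet_def by (elim conjE)
  then have cont: "continuous_on UNIV \<psi>"
    by (rule smooth_real.cases) simp
  have "closure {x. \<psi> x \<noteq> 0} \<subseteq> ball 0 1"
    using assms unfolding admissible_wavelet_def by (elim conjE)
  then have supp: "norm y < 1" if "\<psi> y \<noteq> 0" for y
    using closure_subset[of "{x. \<psi> x \<noteq> 0}"] that by auto
  have "compact (\<psi> ` cball 0 1)"
    using cont by (intro compact_continuous_image) (auto intro: continuous_on_subset)
  then obtain B where B: "\<And>u. u \<in> \<psi> ` cball 0 1 \<Longrightarrow> norm u \<le> B"
    by (meson bounded_iff compact_imp_bounded)
  have "\<bar>\<psi> y\<bar> \<le> B" for y
  proof (cases "\<psi> y = 0")
    case True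
    then show ?thesis using B[of "\<psi> 0"] by auto
  next
    case False
    then show ?thesis using B[of "\<psi> y"] supp[of y] by auto
  qed
  with cont supp show thesis
    by (intro that) (auto simp: unit_bump_def borel_measurable_continuous_onI)
qed

lemma borel_measurable_dil:
  assumes "\<psi> \<in> borel_measurable borel"
  shows "dil z \<psi> \<in> borel_measurable borel"
proof -
  have "(\<lambda>y. (1 / snd z) *\<^sub>R (y - fst z)) \<in> borel_measurable borel"
    by (intro borel_measurable_continuous_onI continuous_intros)
  from measurable_compose[OF this assms] show ?thesis
    unfolding dil_def by (intro borel_measurable_times borel_measurable_const)
qed

lemma borel_measurable_tensor:
  fixes f :: "'a::second_countable_topology \<Rightarrow> real" and g :: "'b::second_countable_topology \<Rightarrow> real"
  assumes "f \<in> borel_measurable borel" "g \<in> borel_measurable borel"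
  shows "tensor f g \<in> borel_measurable borel"
proof -
  have "(\<lambda>y. f (fst y) * g (snd y)) \<in> borel_measurable (borel \<Otimes>\<^sub>M borel)"
    using measurable_compose[OF measurable_fst assms(1)] measurable_compose[OF measurable_snd assms(2)]
    by (rule borel_measurable_times)
  then have "(\<lambda>y. f (fst y) * g (snd y)) \<in> borel_measurable borel"
    by (simp add: borel_prod)
  from measurable_compose[OF this borel_measurable_of_real] show ?thesis
    unfolding tensor_def by (simp del: of_real_mult)
qed

lemma abs_dil_le:
  fixes \<psi> :: "'a::euclidean_space \<Rightarrow> real"
  assumes "unit_bump B \<psi>" "snd z > 0"
  shows "\<bar>dil z \<psi> y\<bar> \<le> snd z powr (- real DIM('a) / 2) * B * indicator (ball (fst z) (snd z)) y"
proof (cases "\<psi> ((1 / snd z) *\<^sub>R (y - fst z)) = 0")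
  case True
  then show ?thesis
    using unit_bump_nonneg[OF assms(1)] by (simp add: dil_def)
next
  case False
  then have "norm ((1 / snd z) *\<^sub>R (y - fst z)) < 1"
    using assms(1) unfolding unit_bump_def by blast
  then have "y \<in> ball (fst z) (snd z)"
    using assms(2) by (simp add: dist_norm norm_minus_commute divide_simps)
  then show ?thesis
    using assms(1) by (simp add: dil_def unit_bump_def abs_mult mult_left_mono)
qed

definition ball_overlap :: "('a::euclidean_space \<times> real) \<Rightarrow> ('a \<times> real) \<Rightarrow> real" where
  "ball_overlap z w = (snd z * snd w) powr (- real DIM('a) / 2) *
     measure lborel (ball (fst z) (snd z) \<inter> ball (fst w) (snd w))"

lemma ball_overlap_nonneg: "ball_overlap z w \<ge> 0"
  by (simp add: ball_overlap_def)

lemma measure_lborel_Times: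
  fixes A :: "'a::euclidean_space set" and B :: "'b::euclidean_space set"
  assumes "A \<in> sets borel" "B \<in> sets borel" "emeasure lborel A < \<infinity>" "emeasure lborel B < \<infinity>"
  shows "measure lborel (A \<times> B) = measure lborel A * measure lborel B"
proof -
  have "emeasure (lborel :: ('a \<times> 'b) measure) (A \<times> B) = emeasure (lborel \<Otimes>\<^sub>M lborel) (A \<times> B)"
    by (simp add: lborel_prod)
  also have "\<dots> = emeasure lborel A * emeasure lborel B"
    using assms by (intro lborel.emeasure_pair_measure_Times) auto
  finally show ?thesis
    unfolding measure_def by (simp add: enn2real_mult)
qed

lemma norm_tensor_dil_mult_le:
  fixes \<psi>1 :: "'a::euclidean_space \<Rightarrow> real" and \<psi>2 :: "'b::euclidean_space \<Rightarrow> real"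
  assumes "unit_bump B1 \<psi>1" "unit_bump B2 \<psi>2"
    and "snd z1 > 0" "snd z2 > 0" "snd w1 > 0" "snd w2 > 0"
  shows "cmod (tensor (dil z1 \<psi>1) (dil z2 \<psi>2) y) * cmod (tensor (dil w1 \<psi>1) (dil w2 \<psi>2) y)
    \<le> (B1 * B2)\<^sup>2 * (snd z1 * snd w1) powr (- real DIM('a) / 2) * (snd z2 * snd w2) powr (- real DIM('b) / 2)
       * indicator ((ball (fst z1) (snd z1) \<inter> ball (fst w1) (snd w1))
                    \<times> (ball (fst z2) (snd z2) \<inter> ball (fst w2) (snd w2))) y"
proof -
  have "cmod (tensor (dil z1 \<psi>1) (dil z2 \<psi>2) y) * cmod (tensor (dil w1 \<psi>1) (dil w2 \<psi>2) y)
    = \<bar>dil z1 \<psi>1 (fst y)\<bar> * \<bar>dil w1 \<psi>1 (fst y)\<bar> * \<bar>dil z2 \<psi>2 (snd y)\<bar> * \<bar>dil w2 \<psi>2 (snd y)\<bar>"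
    unfolding tensor_def norm_of_real by (simp add: abs_mult ac_simps del: of_real_mult)
  also have "\<dots> \<le> (snd z1 powr (- real DIM('a) / 2) * B1 * indicator (ball (fst z1) (snd z1)) (fst y))
     * (snd w1 powr (- real DIM('a) / 2) * B1 * indicator (ball (fst w1) (snd w1)) (fst y))
     * (snd z2 powr (- real DIM('b) / 2) * B2 * indicator (ball (fst z2) (snd z2)) (snd y))
     * (snd w2 powr (- real DIM('b) / 2) * B2 * indicator (ball (fst w2) (snd w2)) (snd y))"
    using assms unit_bump_nonneg[OF assms(1)] unit_bump_nonneg[OF assms(2)]
    by (intro mult_mono abs_dil_le mult_nonneg_nonneg abs_ge_zero) auto
  also have "\<dots> = (B1 * B2)\<^sup>2 * (snd z1 * snd w1) powr (- real DIM('a) / 2)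
       * (snd z2 * snd w2) powr (- real DIM('b) / 2)
       * indicator ((ball (fst z1) (snd z1) \<inter> ball (fst w1) (snd w1))
                    \<times> (ball (fst z2) (snd z2) \<inter> ball (fst w2) (snd w2))) y"
    using assms(3-) by (simp add: indicator_times indicator_inter_arith powr_mult power2_eq_square ac_simps)
  finally show ?thesis .
qed

lemma tensor_dil_integral_le:
  fixes \<psi>1 :: "'a::euclidean_space \<Rightarrow> real" and \<psi>2 :: "'b::euclidean_space \<Rightarrow> real"
  assumes "unit_bump B1 \<psi>1" "unit_bump B2 \<psi>2"
    and "snd z1 > 0" "snd z2 > 0" "snd w1 > 0" "snd w2 > 0"
  shows "integrable lborel (\<lambda>y. cmod (tensor (dil z1 \<psi>1) (dil z2 \<psi>2) y) * cmod (tensor (dil w1 \<psi>1) (dil w2 \<psi>2) y))"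
    and "(\<integral>y. cmod (tensor (dil z1 \<psi>1) (dil z2 \<psi>2) y) * cmod (tensor (dil w1 \<psi>1) (dil w2 \<psi>2) y) \<partial>lborel)
         \<le> (B1 * B2)\<^sup>2 * ball_overlap z1 w1 * ball_overlap z2 w2"
proof -
  define P1 where "P1 = ball (fst z1) (snd z1) \<inter> ball (fst w1) (snd w1)"
  define P2 where "P2 = ball (fst z2) (snd z2) \<inter> ball (fst w2) (snd w2)"
  define K where "K = (B1 * B2)\<^sup>2 * (snd z1 * snd w1) powr (- real DIM('a) / 2)
      * (snd z2 * snd w2) powr (- real DIM('b) / 2)"
  have P_sets: "P1 \<in> sets borel" "P2 \<in> sets borel" "P1 \<times> P2 \<in> sets borel"
    unfolding P1_def P2_def by (auto intro!: borel_open open_Times)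
  have P_fin: "emeasure lborel P1 < \<infinity>" "emeasure lborel P2 < \<infinity>" "emeasure lborel (P1 \<times> P2) < \<infinity>"
    unfolding P1_def P2_def by (auto intro!: emeasure_bounded_finite bounded_Times simp flip: infinity_ennreal_def)
  have "K \<ge> 0"
    by (simp add: K_def)
  have int_K: "integrable lborel (\<lambda>y. K * indicator (P1 \<times> P2) y)"
    using P_sets P_fin by (intro integrable_mult_right integrable_real_indicator) auto
  have bound: "cmod (tensor (dil z1 \<psi>1) (dil z2 \<psi>2) y) * cmod (tensor (dil w1 \<psi>1) (dil w2 \<psi>2) y)
    \<le> K * indicator (P1 \<times> P2) y" for y
    unfolding K_def P1_def P2_def by (rule norm_tensor_dil_mult_le[OF assms])
  have [measurable]: "tensor (dil z \<psi>1) (dil w \<psi>2) \<in> borel_measurable borel" for z w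
    using assms(1,2) unfolding unit_bump_def by (intro borel_measurable_tensor borel_measurable_dil) auto
  have "(\<lambda>y. cmod (tensor (dil z1 \<psi>1) (dil z2 \<psi>2) y) * cmod (tensor (dil w1 \<psi>1) (dil w2 \<psi>2) y))
      \<in> borel_measurable lborel"
    by measurable
  then show int: "integrable lborel
      (\<lambda>y. cmod (tensor (dil z1 \<psi>1) (dil z2 \<psi>2) y) * cmod (tensor (dil w1 \<psi>1) (dil w2 \<psi>2) y))"
  proof (intro Bochner_Integration.integrable_bound[OF int_K] AE_I2)
    fix y
    show "norm (cmod (tensor (dil z1 \<psi>1) (dil z2 \<psi>2) y) * cmod (tensor (dil w1 \<psi>1) (dil w2 \<psi>2) y))
        \<le> norm (K * indicator (P1 \<times> P2) y)"
      using bound[of y] \<open>K \<ge> 0\<close> by (simp add: abs_mult)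
  qed
  have "(\<integral>y. cmod (tensor (dil z1 \<psi>1) (dil z2 \<psi>2) y) * cmod (tensor (dil w1 \<psi>1) (dil w2 \<psi>2) y) \<partial>lborel)
     \<le> (\<integral>y. K * indicator (P1 \<times> P2) y \<partial>lborel)"
    by (rule integral_mono[OF int int_K bound])
  also have "\<dots> = K * (measure lborel P1 * measure lborel P2)"
    using P_sets P_fin by (simp add: measure_lborel_Times)
  also have "\<dots> = (B1 * B2)\<^sup>2 * ball_overlap z1 w1 * ball_overlap z2 w2"
    unfolding K_def ball_overlap_def P1_def P2_def by (simp add: ac_simps)
  finally show "(\<integral>y. cmod (tensor (dil z1 \<psi>1) (dil z2 \<psi>2) y) * cmod (tensor (dil w1 \<psi>1) (dil w2 \<psi>2) y) \<partial>lborel)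
         \<le> (B1 * B2)\<^sup>2 * ball_overlap z1 w1 * ball_overlap z2 w2" .
qed

lemma measure_ball_inter_le:
  fixes x y :: "'a::euclidean_space"
  assumes "t > 0" "s > 0"
  shows "measure lborel (ball x t \<inter> ball y s) \<le> min t s ^ DIM('a) * measure lborel (ball (0::'a) 1)"
proof -
  have "measure lborel (ball x t \<inter> ball y s) \<le> measure lborel (ball x t)"
    "measure lborel (ball x t \<inter> ball y s) \<le> measure lborel (ball y s)"
    by (intro measure_mono_fmeasurable fmeasurableI emeasure_lborel_ball_finite; simp)+
  then show ?thesis
    using content_ball_conv_unit_ball[of t x] content_ball_conv_unit_ball[of s y] assms
    by (cases "t \<le> s") (auto simp: min_def)
qed

lemma powr_mult_minus_times_powr_double:
  fixes m M a :: real
  assumes "0 < m" "0 < M"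
  shows "(m * M) powr (- a) * m powr (2 * a) = (m / M) powr a"
proof -
  have "(m * M) powr (- a) * m powr (2 * a) = M powr (- a) * (m powr (- a) * m powr (2 * a))"
    using assms by (simp add: powr_mult ac_simps)
  also have "m powr (- a) * m powr (2 * a) = m powr a"
    by (simp flip: powr_add)
  also have "M powr (- a) * m powr a = m powr a / M powr a"
    by (simp add: powr_minus divide_inverse)
  also have "\<dots> = (m / M) powr a"
    using assms by (simp add: powr_divide)
  finally show ?thesis .
qed

lemma ball_overlap_le_sqrt_ratio:
  fixes z w :: "'a::euclidean_space \<times> real"
  assumes "snd z > 0" "snd w > 0"
  shows "ball_overlap z w
    \<le> measure lborel (ball (0::'a) 1) * sqrt (min (snd z) (snd w) / max (snd z) (snd w))"
proof -
  define m M where "m = min (snd z) (snd w)" and "M = max (snd z) (snd w)"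
  define V where "V = measure lborel (ball (0::'a) 1)"
  define n where "n = real DIM('a)"
  have mM: "0 < m" "m \<le> M" "snd z * snd w = m * M"
    using assms by (auto simp: m_def M_def min_def max_def)
  have "n \<ge> 1"
    by (simp add: n_def Suc_leI)
  have "ball_overlap z w = (m * M) powr (- n / 2) * measure lborel (ball (fst z) (snd z) \<inter> ball (fst w) (snd w))"
    by (simp add: ball_overlap_def mM(3) n_def)
  also have "\<dots> \<le> (m * M) powr (- n / 2) * (m ^ DIM('a) * V)"
    using measure_ball_inter_le[OF assms, of "fst z" "fst w"] by (intro mult_left_mono) (auto simp: m_def V_def)
  also have "m ^ DIM('a) = m powr (2 * (n / 2))"
    using mM by (simp add: powr_realpow n_def)
  also have "(m * M) powr (- n / 2) * (m powr (2 * (n / 2)) * V) = (m / M) powr (n / 2) * V"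
    using powr_mult_minus_times_powr_double[of m M "n / 2"] mM by simp
  also have "\<dots> \<le> (m / M) powr (1 / 2) * V"
    using mM \<open>n \<ge> 1\<close> by (intro mult_right_mono powr_mono') (auto simp: V_def)
  also have "\<dots> = V * sqrt (m / M)"
    using mM by (simp add: powr_half_sqrt)
  finally show ?thesis
    by (simp add: V_def m_def M_def)
qed

lemma ball_overlap_le:
  fixes z w :: "'a::euclidean_space \<times> real"
  assumes "snd z > 0" "snd w > 0"
  shows "ball_overlap z w \<le> measure lborel (ball (0::'a) 1)"
proof -
  have "sqrt (min (snd z) (snd w) / max (snd z) (snd w)) \<le> 1"
    using assms by (auto simp: min_def max_def)
  then have "measure lborel (ball (0::'a) 1) * sqrt (min (snd z) (snd w) / max (snd z) (snd w))
      \<le> measure lborel (ball (0::'a) 1) * 1"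
    by (intro mult_left_mono) auto
  with ball_overlap_le_sqrt_ratio[OF assms] show ?thesis
    by linarith
qed

lemma ball_overlap_eq_0:
  assumes "dist (fst z) (fst w) \<ge> snd z + snd w"
  shows "ball_overlap z w = 0"
proof -
  have "ball (fst z) (snd z) \<inter> ball (fst w) (snd w) = {}"
    using assms dist_triangle_less_add[of "fst z" _ "snd z" "fst w" "snd w"]
    by (force simp: dist_commute)
  then show ?thesis
    by (simp add: ball_overlap_def)
qed

section \<open>Decay of overlaps at hyperbolic infinity\<close>

lemma outside_hball_origin_ge:
  assumes "z \<in> upper_half" "z \<notin> hball (0, 1) (arcosh (1 + A))" "A \<ge> 0"
  shows "((norm (fst z))\<^sup>2 + (1 - snd z)\<^sup>2) / (2 * snd z) \<ge> A"
proof -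
  define D where "D = ((norm (fst z))\<^sup>2 + (1 - snd z)\<^sup>2) / (2 * snd z)"
  have "D \<ge> 0"
    using assms(1) by (simp add: D_def upper_half_def)
  moreover have "hdist (0, 1) z = arcosh (1 + D)"
    by (simp add: hdist_def D_def)
  ultimately show ?thesis
    using assms by (simp add: hball_def D_def)
qed

lemma norm_fst_gt_outside_hball:
  assumes "z \<in> upper_half" "0 < a" "a \<le> snd z" "snd z \<le> b"
    and "z \<notin> hball (0, 1) (arcosh (1 + (c\<^sup>2 + (1 + b)\<^sup>2 + 1) / (2 * a)))"
  shows "norm (fst z) > c"
proof -
  define A where "A = (c\<^sup>2 + (1 + b)\<^sup>2 + 1) / (2 * a)"
  have "A \<ge> 0"
    using assms(2) by (simp add: A_def)
  have "c\<^sup>2 + (1 + b)\<^sup>2 + 1 = 2 * a * A"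
    using assms(2) by (simp add: A_def)
  also have "\<dots> \<le> 2 * snd z * A"
    using assms(3) \<open>A \<ge> 0\<close> by (simp add: mult_right_mono)
  also have "\<dots> \<le> (norm (fst z))\<^sup>2 + (1 - snd z)\<^sup>2"
    using outside_hball_origin_ge[OF assms(1) assms(5)[folded A_def] \<open>A \<ge> 0\<close>] assms(2,3)
    by (simp add: field_simps)
  also have "(1 - snd z)\<^sup>2 \<le> (1 + b)\<^sup>2"
    using assms(2-4) by (intro power2_le_iff_abs_le[THEN iffD2]) auto
  finally have "c\<^sup>2 < (norm (fst z))\<^sup>2"
    by simp
  then show ?thesis
    by (rule power2_less_imp_less) simp
qed

lemma ball_overlap_vanishes_at_infinity:
  fixes w :: "'a::euclidean_space \<times> real"
  assumes "snd w > 0" "\<delta> > 0"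
  shows "\<exists>R. \<forall>z\<in>upper_half. z \<notin> hball (0, 1) R \<longrightarrow> ball_overlap w z \<le> \<delta>"
proof -
  define V where "V = measure lborel (ball (0::'a) 1)"
  have "V \<ge> 0"
    by (simp add: V_def)
  define \<rho> where "\<rho> = min 1 ((\<delta> / (V + 1))\<^sup>2)"
  have \<rho>: "0 < \<rho>" "\<rho> \<le> 1"
    using assms \<open>V \<ge> 0\<close> by (auto simp: \<rho>_def)
  have "sqrt \<rho> \<le> \<delta> / (V + 1)"
    using assms \<open>V \<ge> 0\<close> real_sqrt_le_mono[of \<rho> "(\<delta> / (V + 1))\<^sup>2"] by (simp add: \<rho>_def)
  then have "V * sqrt \<rho> \<le> V * (\<delta> / (V + 1))"
    using \<open>V \<ge> 0\<close> by (rule mult_left_mono)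
  also have "\<dots> \<le> \<delta>"
    using \<open>V \<ge> 0\<close> assms by (simp add: field_simps)
  finally have V\<rho>: "V * sqrt \<rho> \<le> \<delta>" .
  define s where "s = snd w"
  define c where "c = norm (fst w) + s / \<rho> + s"
  show ?thesis
  proof (intro exI ballI impI)
    fix z :: "'a \<times> real"
    assume z: "z \<in> upper_half" "z \<notin> hball (0, 1) (arcosh (1 + (c\<^sup>2 + (1 + s / \<rho>)\<^sup>2 + 1) / (2 * (\<rho> * s))))"
    define t where "t = snd z"
    have "t > 0" "s > 0"
      using z(1) assms(1) by (auto simp: upper_half_def t_def s_def)
    show "ball_overlap w z \<le> \<delta>"
      \<comment> \<open>either the scales are far apart, or they are comparable and then the centres are\<close>
    proof (cases "min s t / max s t \<le> \<rho>")
      case True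
      have "ball_overlap w z \<le> V * sqrt (min s t / max s t)"
        using ball_overlap_le_sqrt_ratio[of w z] \<open>t > 0\<close> \<open>s > 0\<close> by (simp add: V_def s_def t_def)
      also have "\<dots> \<le> V * sqrt \<rho>"
        using True \<open>V \<ge> 0\<close> by (intro mult_left_mono) auto
      finally show ?thesis
        using V\<rho> by simp
    next
      case False
      then have "\<rho> * max s t < min s t"
        using \<open>t > 0\<close> \<open>s > 0\<close> by (simp add: field_simps min_le_iff_disj)
      moreover have "\<rho> * s \<le> \<rho> * max s t" "\<rho> * t \<le> \<rho> * max s t"
        using \<rho> by (simp_all add: mult_left_mono)
      ultimately have "\<rho> * s < t" "\<rho> * t < s"
        using min.cobounded1[of s t] min.cobounded2[of s t] by linarith+
      then have t: "\<rho> * s < t" "t < s / \<rho>"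
        using \<rho> by (simp_all add: field_simps)
      have "norm (fst z) > c"
        using t \<rho> \<open>s > 0\<close> unfolding t_def
        by (intro norm_fst_gt_outside_hball[OF z(1) _ _ _ z(2)]) auto
      then have "dist (fst w) (fst z) \<ge> s + t"
        using t norm_triangle_ineq3[of "fst z" "fst w"] by (simp add: c_def dist_norm norm_minus_commute)
      then show ?thesis
        using assms(2) by (simp add: ball_overlap_eq_0 s_def t_def)
    qed
  qed
qed

section \<open>Wave packets\<close>

lemma tensor_dil_L2:
  fixes \<psi>1 :: "'a::euclidean_space \<Rightarrow> real" and \<psi>2 :: "'b::euclidean_space \<Rightarrow> real"
  assumes "unit_bump B1 \<psi>1" "unit_bump B2 \<psi>2" "snd z1 > 0" "snd z2 > 0"
  shows "tensor (dil z1 \<psi>1) (dil z2 \<psi>2) \<in> L2"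
    and "L2_norm (tensor (dil z1 \<psi>1) (dil z2 \<psi>2))
      \<le> B1 * B2 * sqrt (measure lborel (ball (0::'a) 1) * measure lborel (ball (0::'b) 1))"
proof -
  note int = tensor_dil_integral_le[OF assms(1,2) assms(3,4) assms(3,4)]
  have "tensor (dil z1 \<psi>1) (dil z2 \<psi>2) \<in> borel_measurable borel"
    using assms(1,2) unfolding unit_bump_def by (intro borel_measurable_tensor borel_measurable_dil) auto
  with int(1) show "tensor (dil z1 \<psi>1) (dil z2 \<psi>2) \<in> L2"
    by (simp add: L2_def power2_eq_square)
  have "(L2_norm (tensor (dil z1 \<psi>1) (dil z2 \<psi>2)))\<^sup>2
      \<le> (B1 * B2)\<^sup>2 * ball_overlap z1 z1 * ball_overlap z2 z2"
    using int(2) unfolding L2_norm_sq by (simp add: power2_eq_square)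
  also have "\<dots> \<le> (B1 * B2)\<^sup>2 * (measure lborel (ball (0::'a) 1) * measure lborel (ball (0::'b) 1))"
    using ball_overlap_le[of z1 z1] ball_overlap_le[of z2 z2] assms(3,4)
    by (simp add: mult.assoc mult_left_mono mult_mono ball_overlap_nonneg)
  also have "\<dots> = (B1 * B2 * sqrt (measure lborel (ball (0::'a) 1) * measure lborel (ball (0::'b) 1)))\<^sup>2"
    by (simp add: power_mult_distrib)
  finally show "L2_norm (tensor (dil z1 \<psi>1) (dil z2 \<psi>2))
      \<le> B1 * B2 * sqrt (measure lborel (ball (0::'a) 1) * measure lborel (ball (0::'b) 1))"
    using unit_bump_nonneg[OF assms(1)] unit_bump_nonneg[OF assms(2)]
    by (rule power2_le_imp_le[OF _ mult_nonneg_nonneg[OF mult_nonneg_nonneg]]) simp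
qed

lemma tensor_dil_decay:
  fixes \<psi>1 :: "'a::euclidean_space \<Rightarrow> real" and \<psi>2 :: "'b::euclidean_space \<Rightarrow> real"
  assumes "unit_bump B1 \<psi>1" "unit_bump B2 \<psi>2" "w1 \<in> upper_half" "w2 \<in> upper_half" "\<delta> > 0"
  shows "\<exists>R. \<forall>z1\<in>upper_half. \<forall>z2\<in>upper_half. (z1 \<notin> hball (0, 1) R \<or> z2 \<notin> hball (0, 1) R) \<longrightarrow>
    (\<integral>y. cmod (tensor (dil w1 \<psi>1) (dil w2 \<psi>2) y) * cmod (tensor (dil z1 \<psi>1) (dil z2 \<psi>2) y) \<partial>lborel) \<le> \<delta>"
proof -
  define K where "K = (B1 * B2)\<^sup>2"
  define V1 where "V1 = measure lborel (ball (0::'a) 1)"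
  define V2 where "V2 = measure lborel (ball (0::'b) 1)"
  define \<delta>' where "\<delta>' = \<delta> / (K * (V1 + V2) + 1)"
  have "K \<ge> 0" "V1 \<ge> 0" "V2 \<ge> 0"
    by (simp_all add: K_def V1_def V2_def)
  then have denom: "K * (V1 + V2) + 1 > 0"
    by (simp add: add_nonneg_pos)
  then have "\<delta>' > 0"
    unfolding \<delta>'_def by (rule divide_pos_pos[OF assms(5)])
  have small: "K * \<delta>' * V \<le> \<delta>" if "0 \<le> V" "V \<le> V1 + V2" for V
  proof -
    have "K * \<delta>' * V \<le> \<delta>' * (K * (V1 + V2) + 1)"
      using that \<open>K \<ge> 0\<close> \<open>\<delta>' > 0\<close> mult_left_mono[OF that(2), of "K * \<delta>'"] by (simp add: algebra_simps)
    also have "\<dots> = \<delta>"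
      using denom by (simp add: \<delta>'_def)
    finally show ?thesis .
  qed
  have w_pos: "snd w1 > 0" "snd w2 > 0"
    using assms(3,4) by (simp_all add: upper_half_def)
  obtain R1 where R1: "\<And>z. z \<in> upper_half \<Longrightarrow> z \<notin> hball (0, 1) R1 \<Longrightarrow> ball_overlap w1 z \<le> \<delta>'"
    using ball_overlap_vanishes_at_infinity[OF w_pos(1) \<open>\<delta>' > 0\<close>] by blast
  obtain R2 where R2: "\<And>z. z \<in> upper_half \<Longrightarrow> z \<notin> hball (0, 1) R2 \<Longrightarrow> ball_overlap w2 z \<le> \<delta>'"
    using ball_overlap_vanishes_at_infinity[OF w_pos(2) \<open>\<delta>' > 0\<close>] by blast
  show ?thesis
  proof (intro exI[of _ "max R1 R2"] ballI impI)
    fix z1 :: "'a \<times> real" and z2 :: "'b \<times> real"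
    assume z: "z1 \<in> upper_half" "z2 \<in> upper_half"
      and far: "z1 \<notin> hball (0, 1) (max R1 R2) \<or> z2 \<notin> hball (0, 1) (max R1 R2)"
    have z_pos: "snd z1 > 0" "snd z2 > 0"
      using z by (simp_all add: upper_half_def)
    have O1: "0 \<le> ball_overlap w1 z1" "ball_overlap w1 z1 \<le> V1"
      and O2: "0 \<le> ball_overlap w2 z2" "ball_overlap w2 z2 \<le> V2"
      using ball_overlap_le[OF w_pos(1) z_pos(1)] ball_overlap_le[OF w_pos(2) z_pos(2)]
      by (simp_all add: ball_overlap_nonneg V1_def V2_def)
    have "(\<integral>y. cmod (tensor (dil w1 \<psi>1) (dil w2 \<psi>2) y) * cmod (tensor (dil z1 \<psi>1) (dil z2 \<psi>2) y) \<partial>lborel)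
        \<le> K * ball_overlap w1 z1 * ball_overlap w2 z2"
      unfolding K_def using tensor_dil_integral_le(2)[OF assms(1,2) w_pos z_pos] .
    also have "\<dots> \<le> \<delta>"
      using far
    proof
      assume "z1 \<notin> hball (0, 1) (max R1 R2)"
      then have "ball_overlap w1 z1 \<le> \<delta>'"
        using R1 z(1) by (auto simp: hball_def)
      then have "K * ball_overlap w1 z1 * ball_overlap w2 z2 \<le> K * \<delta>' * ball_overlap w2 z2"
        using \<open>K \<ge> 0\<close> O2 by (intro mult_right_mono mult_left_mono)
      also have "\<dots> \<le> \<delta>"
        using O2 \<open>V1 \<ge> 0\<close> by (intro small) auto
      finally show ?thesis .
    next
      assume "z2 \<notin> hball (0, 1) (max R1 R2)"
      then have "ball_overlap w2 z2 \<le> \<delta>'"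
        using R2 z(2) by (auto simp: hball_def)
      then have "K * ball_overlap w1 z1 * ball_overlap w2 z2 \<le> K * ball_overlap w1 z1 * \<delta>'"
        using \<open>K \<ge> 0\<close> O1 by (intro mult_left_mono) simp_all
      also have "\<dots> = K * \<delta>' * ball_overlap w1 z1"
        by (simp add: ac_simps)
      also have "\<dots> \<le> \<delta>"
        using O1 \<open>V2 \<ge> 0\<close> by (intro small) auto
      finally show ?thesis .
    qed
    finally show "(\<integral>y. cmod (tensor (dil w1 \<psi>1) (dil w2 \<psi>2) y) * cmod (tensor (dil z1 \<psi>1) (dil z2 \<psi>2) y) \<partial>lborel)
        \<le> \<delta>" .
  qed
qed

lemma compact_L2_tensor_dil_vanishes_at_infinity:
  fixes \<psi>1 :: "'a::euclidean_space \<Rightarrow> real" and \<psi>2 :: "'b::euclidean_space \<Rightarrow> real"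
  assumes "unit_bump B1 \<psi>1" "unit_bump B2 \<psi>2" "linear_L2 T" "compact_L2 T" "\<epsilon> > 0"
  shows "\<exists>R. \<forall>z1\<in>upper_half. \<forall>z2\<in>upper_half. (z1 \<notin> hball (0, 1) R \<or> z2 \<notin> hball (0, 1) R) \<longrightarrow>
    L2_norm (T (tensor (dil z1 \<psi>1) (dil z2 \<psi>2))) \<le> \<epsilon>"
proof -
  define I where "I = (upper_half :: ('a \<times> real) set) \<times> (upper_half :: ('b \<times> real) set)"
  define \<Phi> where "\<Phi> = (\<lambda>(z1, z2). tensor (dil z1 \<psi>1) (dil z2 \<psi>2))"
  define far :: "real \<Rightarrow> ('a \<times> real) \<times> ('b \<times> real) \<Rightarrow> bool"
    where "far = (\<lambda>R (z1, z2). z1 \<notin> hball (0, 1) R \<or> z2 \<notin> hball (0, 1) R)"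
  have "\<exists>R. \<forall>z\<in>I. far R z \<longrightarrow> L2_norm (T (\<Phi> z)) \<le> \<epsilon>"
  proof (rule compact_L2_vanishes_at_infinity[OF assms(3,4)])
    show "\<Phi> z \<in> L2" "L2_norm (\<Phi> z)
        \<le> B1 * B2 * sqrt (measure lborel (ball (0::'a) 1) * measure lborel (ball (0::'b) 1))"
      if "z \<in> I" for z
      using that tensor_dil_L2[OF assms(1,2)] by (auto simp: I_def \<Phi>_def upper_half_def)
    show "far R z" if "far R' z" "R \<le> R'" for R R' z
      using that by (auto simp: far_def hball_def)
    show "\<exists>R. \<forall>z\<in>I. far R z \<longrightarrow>
        (\<integral>y. cmod (\<Phi> w y) * cmod (\<Phi> z y) \<partial>lborel) \<le> \<delta>"
      if "w \<in> I" "\<delta> > 0" for w \<delta>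
      using that tensor_dil_decay[OF assms(1,2), of "fst w" "snd w" \<delta>]
      by (auto simp: I_def \<Phi>_def far_def case_prod_beta)
  qed (rule assms(5))
  then show ?thesis
    by (auto simp: I_def \<Phi>_def far_def)
qed

lemma compact_L2_product_weak_compactness:
  fixes \<psi>1 :: "'a::euclidean_space \<Rightarrow> real" and \<psi>2 :: "'b::euclidean_space \<Rightarrow> real"
  assumes B: "unit_bump B1 \<psi>1" "unit_bump B2 \<psi>2" and T: "linear_L2 T" "compact_L2 T"
  shows "\<forall>\<epsilon>>0. \<exists>R'. \<forall>z1\<in>upper_half. \<forall>z2\<in>upper_half.
           (z1 \<notin> hball (0, 1) R' \<or> z2 \<notin> hball (0, 1) R') \<longrightarrow>
           (\<forall>w1\<in>hball z1 R. \<forall>w2\<in>hball z2 R.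
              cmod (L2_inner (T (tensor (dil z1 \<psi>1) (dil z2 \<psi>2))) (tensor (dil w1 \<psi>1) (dil w2 \<psi>2))) \<le> \<epsilon>)"
proof (intro allI impI)
  fix \<epsilon> :: real
  assume "\<epsilon> > 0"
  define M where "M = B1 * B2 * sqrt (measure lborel (ball (0::'a) 1) * measure lborel (ball (0::'b) 1))"
  have "M \<ge> 0"
    using B[THEN unit_bump_nonneg] by (simp add: M_def)
  then obtain R' where R': "\<forall>z1\<in>upper_half. \<forall>z2\<in>upper_half. (z1 \<notin> hball (0, 1) R' \<or> z2 \<notin> hball (0, 1) R') \<longrightarrow>
      L2_norm (T (tensor (dil z1 \<psi>1) (dil z2 \<psi>2))) \<le> \<epsilon> / (M + 1)"
    using compact_L2_tensor_dil_vanishes_at_infinity[OF B T, of "\<epsilon> / (M + 1)"] \<open>\<epsilon> > 0\<close> by auto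
  have "cmod (L2_inner (T (tensor (dil z1 \<psi>1) (dil z2 \<psi>2))) (tensor (dil w1 \<psi>1) (dil w2 \<psi>2))) \<le> \<epsilon>"
    if "z1 \<in> upper_half" "z2 \<in> upper_half" "w1 \<in> hball z1 R" "w2 \<in> hball z2 R"
      and small: "L2_norm (T (tensor (dil z1 \<psi>1) (dil z2 \<psi>2))) \<le> \<epsilon> / (M + 1)"
    for z1 w1 :: "'a \<times> real" and z2 w2 :: "'b \<times> real"
  proof -
    have pos: "snd z1 > 0" "snd z2 > 0" "snd w1 > 0" "snd w2 > 0"
      using that by (simp_all add: hball_def upper_half_def)
    have "cmod (L2_inner (T (tensor (dil z1 \<psi>1) (dil z2 \<psi>2))) (tensor (dil w1 \<psi>1) (dil w2 \<psi>2)))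
        \<le> L2_norm (T (tensor (dil z1 \<psi>1) (dil z2 \<psi>2))) * L2_norm (tensor (dil w1 \<psi>1) (dil w2 \<psi>2))"
      using pos by (intro norm_L2_inner_le linear_L2_mem_L2[OF T(1)] tensor_dil_L2[OF B])
    also have "\<dots> \<le> \<epsilon> / (M + 1) * M"
      using \<open>\<epsilon> > 0\<close> \<open>M \<ge> 0\<close> small tensor_dil_L2(2)[OF B pos(3,4), folded M_def] L2_norm_nonneg
      by (intro mult_mono) auto
    also have "\<dots> \<le> \<epsilon>"
      using \<open>\<epsilon> > 0\<close> \<open>M \<ge> 0\<close> by (simp add: field_simps)
    finally show ?thesis .
  qed
  with R' show "\<exists>R'. \<forall>z1\<in>upper_half. \<forall>z2\<in>upper_half.
           (z1 \<notin> hball (0, 1) R' \<or> z2 \<notin> hball (0, 1) R') \<longrightarrow>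
           (\<forall>w1\<in>hball z1 R. \<forall>w2\<in>hball z2 R.
              cmod (L2_inner (T (tensor (dil z1 \<psi>1) (dil z2 \<psi>2))) (tensor (dil w1 \<psi>1) (dil w2 \<psi>2))) \<le> \<epsilon>)"
    by blast
qed

theorem proposition2p3:
  fixes T :: "(('a::euclidean_space \<times> 'b::euclidean_space) \<Rightarrow> complex) \<Rightarrow> (('a \<times> 'b) \<Rightarrow> complex)"
    and \<psi>1 :: "'a \<Rightarrow> real" and \<psi>2 :: "'b \<Rightarrow> real" and R :: real
  assumes "admissible_wavelet \<psi>1" and "admissible_wavelet \<psi>2"
    and "linear_L2 T" and "compact_L2 T" and "R > 0"
  shows "\<forall>\<epsilon>>0. \<exists>R'. \<forall>z1\<in>upper_half. \<forall>z2\<in>upper_half.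
           (z1 \<notin> hball (0, 1) R' \<or> z2 \<notin> hball (0, 1) R') \<longrightarrow>
           (\<forall>w1\<in>hball z1 R. \<forall>w2\<in>hball z2 R.
              cmod (L2_inner (T (tensor (dil z1 \<psi>1) (dil z2 \<psi>2))) (tensor (dil w1 \<psi>1) (dil w2 \<psi>2))) \<le> \<epsilon>)"
proof -
  obtain B1 B2 where "unit_bump B1 \<psi>1" "unit_bump B2 \<psi>2"
    using admissible_wavelet_unit_bump assms(1,2) by metis
  then show ?thesis
    using compact_L2_product_weak_compactness assms(3,4) by blast
qed

end
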